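(* Let $m\ge 1$ and let $A$ be a $2m\times 2$ binary-block matrix. Then $$\operatorname{M}(AD_m(\operatorname{wt}_A)) = 2^{t}\,\operatorname{M}(AD_{m-1}(\operatorname{wt}_{\operatorname{sh}(A)})),$$ where $t$ is the number of blocks of $A$ equal to $\begin{bmatrix}1&1\\1&1\end{bmatrix}$ (i.e. the number of $0$ terms in $\operatorname{code}(A)$).
   Context: The Aztec diamond graph $AD_n$ is the planar dual graph of the Aztec diamond region of order $n$ (the union of unit squares inside $|x|+|y|=n+1$), rotated by $45^\circ$; it consists of $n$ rows and $n$ columns of 4-cycles called d-cells. The centers of the edges of $AD_n$ form a $2n\times 2n$ array, where the four edges of the d-cell in row $i$, column $j$ occupy rows $2i-1,2i$ and columns $2j-1,2j$ of the array (placed according to their position around the d-cell). A weighted $AD_n$ is given by a $2n\times 2n$ weight matrix whose entries are the edge weights. $\operatorname{M}(G)$ for a weighted graph is the sum over perfect matchings of the product of the weights of their edges; $\operatorname{M}(AD_0)=1$. For a $k\times l$ matrix $A$ with $k,l$ even, $AD_n(\operatorname{wt}_A)$ denotes $AD_n$ whose weight matrix is obtained by placing $A$ in the upper-left corner of the $2n\times 2n$ array and filling the rest periodically (translating $A$ by $l$ columns to the right and $k$ rows down; partial copies allowed at the edges). A $2m\times 2$ matrix $M$ with $2\times 2$ blocks $M_1,\dots,M_m$ (stacked vertically) is a binary-block matrix if each $M_i$ is one of $\begin{bmatrix}1&1\\1&1\end{bmatrix}$, $\begin{bmatrix}1&1\\1&0\end{bmatrix}$, $\begin{bmatrix}0&1\\1&1\end{bmatrix}$,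 $\begin{bmatrix}0&1\\1&0\end{bmatrix}$; its encoded sequence $\operatorname{code}(M)=(s_1,\dots,s_m)$ has $s_i=0,+,-,\pm$ respectively. The operator $\operatorname{sh}$: $\operatorname{sh}(M)$ is the binary-block matrix whose encoded sequence is obtained from $\operatorname{code}(M)$ as follows (a $\pm$ is regarded as a $+$ and a $-$ at the same position): delete all $0$ terms, leaving those positions empty; simultaneously move every $+$ one position to the left cyclically (a $+$ at position $1$ goes to position $m$), leaving its old position empty if nothing else is there; positions $-$ stay fixed; a position holding both a $+$ and a $-$ becomes $\pm$; finally fill all empty positions with $0$. *)

theory Defs
  imports Main
begin

text \<open>Vertices are integer points (x,y) (x to the right, y downwards).
  The d-cell in row i, column j (1-based) is the 4-cycle with centre (2j,2i) and
  vertices W=(2j-1,2i), N=(2j,2i-1), E=(2j+1,2i), S=(2j,2i+1).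
  Edges are indexed by positions (r,c) of the 2n x 2n array, r,c in {1..2n}; position
  (r,c) is an edge of the d-cell ((r+1) div 2, (c+1) div 2): top-left = WN,
  top-right = NE, bottom-left = WS, bottom-right = SE.\<close>

definition AD_pos :: "nat \<Rightarrow> (nat \<times> nat) set" where
  "AD_pos n = {1..2*n} \<times> {1..2*n}"

definition AD_ends :: "nat \<times> nat \<Rightarrow> (nat \<times> nat) set" where
  "AD_ends p = (let r = fst p; c = snd p; i = (r + 1) div 2; j = (c + 1) div 2;
      W = (2*j - 1, 2*i); E = (2*j + 1, 2*i); N = (2*j, 2*i - 1); S = (2*j, 2*i + 1)
    in if odd r then (if odd c then {W, N} else {N, E})
       else (if odd c then {W, S} else {S, E}))"

definition AD_verts :: "nat \<Rightarrow> (nat \<times> nat) set" where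
  "AD_verts n = (\<Union>p \<in> AD_pos n. AD_ends p)"

definition AD_perfect_matching :: "nat \<Rightarrow> (nat \<times> nat) set \<Rightarrow> bool" where
  "AD_perfect_matching n S \<longleftrightarrow> S \<subseteq> AD_pos n \<and>
     (\<forall>v \<in> AD_verts n. card {e \<in> S. v \<in> AD_ends e} = 1)"

definition AD_M :: "nat \<Rightarrow> (nat \<Rightarrow> nat \<Rightarrow> 'a::comm_semiring_1) \<Rightarrow> 'a" where
  "AD_M n w = (\<Sum>S \<in> {S. AD_perfect_matching n S}. \<Prod>e \<in> S. w (fst e) (snd e))"

definition wt :: "nat \<Rightarrow> nat \<Rightarrow> (nat \<Rightarrow> nat \<Rightarrow> 'a) \<Rightarrow> nat \<Rightarrow> nat \<Rightarrow> 'a" where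
  "wt k l A r c = A ((r - 1) mod k + 1) ((c - 1) mod l + 1)"

text \<open>Code symbols: Z = 0, P = +, Mi = -, PM = \<plusminus>.\<close>
datatype bsym = Z | P | Mi | PM

definition has_plus :: "bsym \<Rightarrow> bool" where
  "has_plus s \<longleftrightarrow> s = P \<or> s = PM"

definition has_minus :: "bsym \<Rightarrow> bool" where
  "has_minus s \<longleftrightarrow> s = Mi \<or> s = PM"

definition mk_sym :: "bool \<Rightarrow> bool \<Rightarrow> bsym" where
  "mk_sym pl mi = (if pl \<and> mi then PM else if pl then P else if mi then Mi else Z)"

text \<open>2x2 block of a symbol, local indices a,b in {0,1}:
  Z=[1 1;1 1], P=[1 1;1 0], Mi=[0 1;1 1], PM=[0 1;1 0].\<close>
definition block_entry :: "bsym \<Rightarrow> nat \<Rightarrow> nat \<Rightarrow> nat" where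
  "block_entry s a b =
     (if a = 0 \<and> b = 0 then (if has_minus s then 0 else 1)
      else if a = 1 \<and> b = 1 then (if has_plus s then 0 else 1)
      else 1)"

definition bbmat :: "bsym list \<Rightarrow> nat \<Rightarrow> nat \<Rightarrow> nat" where
  "bbmat cs r c = block_entry (cs ! ((r - 1) div 2)) ((r - 1) mod 2) (c - 1)"

text \<open>sh on encoded sequences (0-based list positions): the new position i receives
  a + from old position (i+1) mod m (cyclic move one to the left) and keeps its own -.\<close>
definition shcode :: "bsym list \<Rightarrow> bsym list" where
  "shcode cs = (let m = length cs in
     map (\<lambda>i. mk_sym (has_plus (cs ! ((i + 1) mod m))) (has_minus (cs ! i))) [0..<m])"

end

theory Submission
  imports Defs
begin

text \<open>
  For a 2m x 2 binary-block matrix A every d-cell of row i of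
  AD_n(wt_A) carries the weights (top-left, top-right, bottom-left, bottom-right)
  = (a_i, 1, 1, d_i) with a_i, d_i in {0,1} read off the i-th block.  Sweeping the
  cells row by row, left to right, turns M(AD_n) into a product of row transfer
  matrices indexed by 0/1-vectors recording which vertices are already matched.
  Two adjacent rows can be exchanged at the cost of explicit scalar factors
  (a Yang-Baxter type relation), and a row with d = 0 at the bottom can be peeled
  off.  Together these give the closed product formula
      M(AD_n) = prod_i (1 + a_i d_i) * prod_{i<j} (1 + a_i d_j)
  for arbitrary nonnegative row parameters.  The theorem then follows by
  comparing this product for the code of A and for its shift: sh keeps the a-part
  of each block and moves the d-part one row up, so the quotient of the two
  products is prod_i (1 + a_i d_i) = 2^t.
\<close>

definition bvecs :: "nat \<Rightarrow> bool list set" where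
  "bvecs n = {xs. length xs = n}"

lemma finite_bvecs [simp]: "finite (bvecs n)"
  using finite_lists_length_eq[of "UNIV :: bool set" n] by (simp add: bvecs_def)

lemma bvecs_0: "bvecs 0 = {[]}"
  by (auto simp: bvecs_def)

lemma sum_bvecs_Cons:
  "(\<Sum>xs\<in>bvecs (Suc n). f xs) = (\<Sum>xs\<in>bvecs n. f (True # xs)) + (\<Sum>xs\<in>bvecs n. f (False # xs))"
proof -
  have "bvecs (Suc n) = Cons True ` bvecs n \<union> Cons False ` bvecs n"
    by (auto simp: bvecs_def length_Suc_conv image_iff)
  then show ?thesis
    by (simp only:) (subst sum.union_disjoint; auto simp: sum.reindex)
qed

lemma sum_bvecs_snoc:
  "(\<Sum>xs\<in>bvecs (Suc n). f xs) = (\<Sum>xs\<in>bvecs n. f (xs @ [True])) + (\<Sum>xs\<in>bvecs n. f (xs @ [False]))"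
proof -
  have "bvecs (Suc n) = (\<lambda>xs. xs @ [True]) ` bvecs n \<union> (\<lambda>xs. xs @ [False]) ` bvecs n"
  proof (intro equalityI subsetI)
    fix xs assume "xs \<in> bvecs (Suc n)"
    then obtain ys y where "xs = ys @ [y]" "ys \<in> bvecs n"
      by (cases xs rule: rev_cases) (auto simp: bvecs_def)
    then show "xs \<in> (\<lambda>xs. xs @ [True]) ` bvecs n \<union> (\<lambda>xs. xs @ [False]) ` bvecs n"
      by (cases y) auto
  qed (auto simp: bvecs_def)
  moreover have "inj_on (\<lambda>xs. xs @ [b]) A" for b :: bool and A
    by (rule inj_onI) simp
  moreover have "(\<lambda>xs. xs @ [True]) ` bvecs n \<inter> (\<lambda>xs. xs @ [False]) ` bvecs n = {}"
    by auto
  ultimately show ?thesis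
    by (simp add: sum.union_disjoint sum.reindex)
qed

lemma sum_bvecs_delta:
  "length y = n \<Longrightarrow> (\<Sum>x\<in>bvecs n. if x = y then f x else 0) = f y"
  using sum.delta[OF finite_bvecs, of y f n] by (simp add: bvecs_def)

section \<open>Row transfer matrices\<close>

text \<open>Local weight of one d-cell with weights (a, 1, 1, d) on its edges (WN, NE,
  WS, SE).  The flags nc, wc tell whether the vertices N and W are already matched
  by earlier cells; sc, ec tell whether this cell matches S and E.  N and W must
  be matched exactly once in total, S and E at most once by this cell; the entry
  1 + a d collects the two choices {NE, WS} and {WN, SE} matching all four.\<close>
definition cell_wt :: "int \<Rightarrow> int \<Rightarrow> bool \<Rightarrow> bool \<Rightarrow> bool \<Rightarrow> bool \<Rightarrow> int" where
  "cell_wt a d nc wc sc ec =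
    (if \<not> nc \<and> \<not> wc \<and> \<not> sc \<and> \<not> ec then a
     else if \<not> nc \<and> wc \<and> \<not> sc \<and> ec then 1
     else if nc \<and> \<not> wc \<and> sc \<and> \<not> ec then 1
     else if nc \<and> wc \<and> sc \<and> ec then d
     else if \<not> nc \<and> \<not> wc \<and> sc \<and> ec then 1 + a * d
     else if nc \<and> wc \<and> \<not> sc \<and> \<not> ec then 1
     else 0)"

text \<open>Transfer matrix of a row of cells with parameters (a, d): it maps the
  states N of the north vertices to the states S of the south vertices; wc is the
  state of the leftmost west vertex and ec the required state of the rightmost
  east vertex.\<close>
fun row_tm :: "int \<Rightarrow> int \<Rightarrow> bool \<Rightarrow> bool \<Rightarrow> bool list \<Rightarrow> bool list \<Rightarrow> int" where
  "row_tm a d wc ec [] [] = (if wc = ec then 1 else 0)"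
| "row_tm a d wc ec (nc # N) (sc # S) =
     cell_wt a d nc wc sc False * row_tm a d False ec N S
   + cell_wt a d nc wc sc True * row_tm a d True ec N S"
| "row_tm a d wc ec _ _ = 0"

text \<open>Product of the row transfer matrices of a list of rows, top to bottom.  In a
  full row the leftmost west vertex is free and the rightmost east vertex must be
  matched inside the row.\<close>
fun transfer :: "(int \<times> int) list \<Rightarrow> bool list \<Rightarrow> bool list \<Rightarrow> int" where
  "transfer [] N S = (if N = S then 1 else 0)"
| "transfer ((a, d) # rs) N S = (\<Sum>U\<in>bvecs (length N). row_tm a d False True N U * transfer rs U S)"

lemma transfer_single: "length N = length S \<Longrightarrow> transfer [(a, d)] N S = row_tm a d False True N S"
  using sum_bvecs_delta[of S "length N" "row_tm a d False True N"]
  by (simp add: if_distrib cong: if_cong)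

lemma transfer_append:
  "transfer (rs1 @ rs2) N S = (\<Sum>U\<in>bvecs (length N). transfer rs1 N U * transfer rs2 U S)"
proof (induction rs1 arbitrary: N)
  case Nil
  have "(\<Sum>U\<in>bvecs (length N). (if N = U then 1 else 0) * transfer rs2 U S)
      = (\<Sum>U\<in>bvecs (length N). if U = N then transfer rs2 U S else 0)"
    by (rule sum.cong) auto
  then show ?case
    using sum_bvecs_delta[of N "length N" "\<lambda>U. transfer rs2 U S"] by simp
next
  case (Cons r rs1)
  obtain a d where r: "r = (a, d)" by force
  have "transfer (r # rs1 @ rs2) N S = (\<Sum>U\<in>bvecs (length N). row_tm a d False True N U *
      (\<Sum>V\<in>bvecs (length N). transfer rs1 U V * transfer rs2 V S))"
    using Cons.IH by (auto simp: r bvecs_def intro!: sum.cong)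
  also have "\<dots> = (\<Sum>V\<in>bvecs (length N).
      (\<Sum>U\<in>bvecs (length N). row_tm a d False True N U * transfer rs1 U V) * transfer rs2 V S)"
    by (simp add: sum_distrib_left sum_distrib_right mult.assoc) (rule sum.swap)
  finally show ?case by (simp add: r)
qed

section \<open>Exchanging two adjacent rows\<close>

definition sum4 :: "(bool \<Rightarrow> bool \<Rightarrow> int) \<Rightarrow> int" where
  "sum4 f = f False False + f False True + f True False + f True True"

lemma sum4_cong: "(\<And>x y. f x y = g x y) \<Longrightarrow> sum4 f = sum4 g"
  by (simp add: sum4_def)

definition stack_wt ::
    "int \<Rightarrow> int \<Rightarrow> int \<Rightarrow> int \<Rightarrow> bool \<Rightarrow> bool \<Rightarrow> bool \<Rightarrow> bool \<Rightarrow> bool \<Rightarrow> bool \<Rightarrow> int" where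
  "stack_wt a d a' d' nc sc w1 w2 e1 e2 =
     cell_wt a d nc w1 False e1 * cell_wt a' d' False w2 sc e2
   + cell_wt a d nc w1 True e1 * cell_wt a' d' True w2 sc e2"

fun double_row ::
    "int \<Rightarrow> int \<Rightarrow> int \<Rightarrow> int \<Rightarrow> bool \<Rightarrow> bool \<Rightarrow> bool \<Rightarrow> bool \<Rightarrow> bool list \<Rightarrow> bool list \<Rightarrow> int" where
  "double_row a d a' d' w1 w2 e1 e2 [] [] = (if w1 = e1 \<and> w2 = e2 then 1 else 0)"
| "double_row a d a' d' w1 w2 e1 e2 (nc # N) (sc # S) =
     sum4 (\<lambda>h1 h2. stack_wt a d a' d' nc sc w1 w2 h1 h2 * double_row a d a' d' h1 h2 e1 e2 N S)"
| "double_row a d a' d' w1 w2 e1 e2 _ _ = 0"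

lemma row_tm_product:
  "length N = length S \<Longrightarrow>
   (\<Sum>U\<in>bvecs (length N). row_tm a d w1 e1 N U * row_tm a' d' w2 e2 U S)
     = double_row a d a' d' w1 w2 e1 e2 N S"
proof (induction N S arbitrary: w1 w2 rule: list_induct2)
  case Nil
  then show ?case by (simp add: bvecs_0)
next
  case (Cons nc N sc S)
  have "(\<Sum>U\<in>bvecs (length (nc # N)). row_tm a d w1 e1 (nc # N) U * row_tm a' d' w2 e2 U (sc # S))
    = (\<Sum>U\<in>bvecs (length N). row_tm a d w1 e1 (nc # N) (True # U) * row_tm a' d' w2 e2 (True # U) (sc # S)
       + row_tm a d w1 e1 (nc # N) (False # U) * row_tm a' d' w2 e2 (False # U) (sc # S))"
    by (simp add: sum_bvecs_Cons sum.distrib)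
  also have "\<dots> = (\<Sum>U\<in>bvecs (length N).
      stack_wt a d a' d' nc sc w1 w2 False False * (row_tm a d False e1 N U * row_tm a' d' False e2 U S)
    + stack_wt a d a' d' nc sc w1 w2 False True * (row_tm a d False e1 N U * row_tm a' d' True e2 U S)
    + stack_wt a d a' d' nc sc w1 w2 True False * (row_tm a d True e1 N U * row_tm a' d' False e2 U S)
    + stack_wt a d a' d' nc sc w1 w2 True True * (row_tm a d True e1 N U * row_tm a' d' True e2 U S))"
    by (rule sum.cong) (simp_all add: stack_wt_def algebra_simps)
  also have "\<dots> = double_row a d a' d' w1 w2 e1 e2 (nc # N) (sc # S)"
    by (simp add: sum.distrib sum_distrib_left[symmetric] Cons.IH sum4_def)
  finally show ?case .
qed

definition exch :: "int \<Rightarrow> int \<Rightarrow> int \<Rightarrow> int \<Rightarrow> bool \<Rightarrow> bool \<Rightarrow> bool \<Rightarrow> bool \<Rightarrow> int" where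
  "exch a d a' d' w1 w2 e1 e2 =
    (if \<not> w1 \<and> \<not> w2 \<and> \<not> e1 \<and> \<not> e2 then 1 + a' * d
     else if w1 \<and> w2 \<and> e1 \<and> e2 then 1 + a * d'
     else if \<not> w1 \<and> w2 \<and> \<not> e1 \<and> e2 then 1 + a' * d'
     else if \<not> w1 \<and> w2 \<and> e1 \<and> \<not> e2 then d - d'
     else if w1 \<and> \<not> w2 \<and> \<not> e1 \<and> e2 then a - a'
     else if w1 \<and> \<not> w2 \<and> e1 \<and> \<not> e2 then 1 + a * d
     else 0)"

text \<open>Local Yang-Baxter relation: the exchange matrix moves through one column
  of two cells, swapping the order of the two rows.\<close>
lemma exch_stack:
  "sum4 (\<lambda>k1 k2. exch a d a' d' w1 w2 k1 k2 * stack_wt a d a' d' nc sc k1 k2 e1 e2) =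
   sum4 (\<lambda>k1 k2. stack_wt a' d' a d nc sc w1 w2 k1 k2 * exch a d a' d' k1 k2 e1 e2)"
  by (cases nc; cases sc; cases w1; cases w2; cases e1; cases e2)
     (simp_all add: sum4_def exch_def stack_wt_def cell_wt_def algebra_simps)

lemma exch_double_row:
  "length N = length S \<Longrightarrow>
   sum4 (\<lambda>h1 h2. exch a d a' d' w1 w2 h1 h2 * double_row a d a' d' h1 h2 e1 e2 N S) =
   sum4 (\<lambda>k1 k2. double_row a' d' a d w1 w2 k1 k2 N S * exch a d a' d' k1 k2 e1 e2)"
proof (induction N S arbitrary: w1 w2 rule: list_induct2)
  case Nil
  show ?case by (cases w1; cases w2; cases e1; cases e2) (simp_all add: sum4_def)
next
  case (Cons nc N sc S)
  let ?R = "exch a d a' d'"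
  let ?X = "stack_wt a d a' d' nc sc" and ?Y = "stack_wt a' d' a d nc sc"
  let ?DX = "\<lambda>h1 h2. double_row a d a' d' h1 h2 e1 e2 N S"
  let ?DY = "\<lambda>h1 h2 k1 k2. double_row a' d' a d h1 h2 k1 k2 N S"
  have "sum4 (\<lambda>h1 h2. ?R w1 w2 h1 h2 * double_row a d a' d' h1 h2 e1 e2 (nc # N) (sc # S))
      = sum4 (\<lambda>k1 k2. sum4 (\<lambda>h1 h2. ?R w1 w2 h1 h2 * ?X h1 h2 k1 k2) * ?DX k1 k2)"
    by (simp add: sum4_def algebra_simps)
  also have "\<dots> = sum4 (\<lambda>k1 k2. sum4 (\<lambda>h1 h2. ?Y w1 w2 h1 h2 * ?R h1 h2 k1 k2) * ?DX k1 k2)"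
    by (rule sum4_cong) (simp add: exch_stack)
  also have "\<dots> = sum4 (\<lambda>h1 h2. ?Y w1 w2 h1 h2 * sum4 (\<lambda>k1 k2. ?R h1 h2 k1 k2 * ?DX k1 k2))"
    by (simp add: sum4_def algebra_simps)
  also have "\<dots> = sum4 (\<lambda>h1 h2. ?Y w1 w2 h1 h2 * sum4 (\<lambda>k1 k2. ?DY h1 h2 k1 k2 * ?R k1 k2 e1 e2))"
    by (rule sum4_cong) (simp add: Cons.IH)
  also have "\<dots> = sum4 (\<lambda>k1 k2. double_row a' d' a d w1 w2 k1 k2 (nc # N) (sc # S) * ?R k1 k2 e1 e2)"
    by (simp add: sum4_def algebra_simps)
  finally show ?case .
qed

text \<open>Specializing to full rows (free west end, matched east end), only the two
  diagonal entries of the exchange matrix survive.\<close>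
lemma double_row_swap:
  "length N = length S \<Longrightarrow>
   (1 + a' * d) * double_row a d a' d' False False True True N S
     = (1 + a * d') * double_row a' d' a d False False True True N S"
  using exch_double_row[of N S a d a' d' False False True True]
  by (simp add: sum4_def exch_def algebra_simps)

lemma transfer_two_rows:
  "transfer ((a, d) # (a', d') # rs) N S =
   (\<Sum>V\<in>bvecs (length N). double_row a d a' d' False False True True N V * transfer rs V S)"
proof -
  have "transfer ((a, d) # (a', d') # rs) N S = transfer ([(a, d), (a', d')] @ rs) N S"
    by simp
  also have "\<dots> = (\<Sum>V\<in>bvecs (length N). transfer [(a, d), (a', d')] N V * transfer rs V S)"
    by (rule transfer_append)
  also have "\<dots> = (\<Sum>V\<in>bvecs (length N). double_row a d a' d' False False True True N V * transfer rs V S)"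
  proof (rule sum.cong[OF refl])
    fix V assume "V \<in> bvecs (length N)"
    then have len: "length N = length V" by (simp add: bvecs_def)
    have "transfer [(a, d), (a', d')] N V
        = (\<Sum>U\<in>bvecs (length N). row_tm a d False True N U * transfer [(a', d')] U V)"
      by simp
    also have "\<dots> = (\<Sum>U\<in>bvecs (length N). row_tm a d False True N U * row_tm a' d' False True U V)"
      using len by (intro sum.cong refl) (simp add: transfer_single bvecs_def del: transfer.simps)
    also have "\<dots> = double_row a d a' d' False False True True N V"
      using len by (rule row_tm_product)
    finally show "transfer [(a, d), (a', d')] N V * transfer rs V S
        = double_row a d a' d' False False True True N V * transfer rs V S"
      by simp
  qed
  finally show ?thesis .
qed

lemma transfer_swap:
  "(1 + a' * d) * transfer (pre @ (a, d) # (a', d') # rs) N S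
     = (1 + a * d') * transfer (pre @ (a', d') # (a, d) # rs) N S"
proof -
  have swap_front: "(1 + a' * d) * transfer ((a, d) # (a', d') # rs) U S
      = (1 + a * d') * transfer ((a', d') # (a, d) # rs) U S" for U
    unfolding transfer_two_rows sum_distrib_left
  proof (rule sum.cong[OF refl])
    fix V assume "V \<in> bvecs (length U)"
    then have "(1 + a' * d) * double_row a d a' d' False False True True U V
        = (1 + a * d') * double_row a' d' a d False False True True U V"
      by (intro double_row_swap) (simp add: bvecs_def)
    then show "(1 + a' * d) * (double_row a d a' d' False False True True U V * transfer rs V S)
        = (1 + a * d') * (double_row a' d' a d False False True True U V * transfer rs V S)"
      by (simp only: mult.assoc[symmetric])
  qed
  show ?thesis
    unfolding transfer_append sum_distrib_left
    by (rule sum.cong[OF refl])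
       (simp only: mult.left_commute[of "1 + a' * d"] mult.left_commute[of "1 + a * d'"] swap_front)
qed

section \<open>The closed product formula\<close>

fun aztec_prod :: "(int \<times> int) list \<Rightarrow> int" where
  "aztec_prod [] = 1"
| "aztec_prod ((a, d) # rs) = (1 + a * d) * prod_list (map (\<lambda>r. 1 + a * snd r) rs) * aztec_prod rs"

lemma aztec_prod_snoc_zero: "aztec_prod (rs @ [(a, 0)]) = aztec_prod rs"
  by (induction rs) auto

lemma aztec_prod_free_top: "aztec_prod ((a, d) # rs) = (1 + a * d) * aztec_prod ((a, 0) # rs)"
  by simp

lemma aztec_prod_swap:
  "(1 + a' * d) * aztec_prod (pre @ (a, d) # (a', d') # rs)
     = (1 + a * d') * aztec_prod (pre @ (a', d') # (a, d) # rs)"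
proof (induction pre)
  case Nil
  then show ?case by (simp add: algebra_simps)
next
  case (Cons r pre)
  obtain b e where r: "r = (b, e)" by force
  let ?L1 = "pre @ (a, d) # (a', d') # rs" and ?L2 = "pre @ (a', d') # (a, d) # rs"
  let ?p = "\<lambda>L. prod_list (map (\<lambda>x. 1 + b * snd x) L)"
  have p: "?p ?L1 = ?p ?L2" by (simp add: ac_simps)
  have "(1 + a' * d) * aztec_prod (r # ?L1) = (1 + b * e) * ?p ?L1 * ((1 + a' * d) * aztec_prod ?L1)"
    by (simp add: r ac_simps)
  also have "\<dots> = (1 + b * e) * ?p ?L2 * ((1 + a * d') * aztec_prod ?L2)"
    by (simp only: Cons.IH p)
  also have "\<dots> = (1 + a * d') * aztec_prod (r # ?L2)"
    by (simp add: r ac_simps)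
  finally show ?case by simp
qed

lemma row_tm_free_top:
  "length S = k \<Longrightarrow>
   row_tm a d wc True (replicate k False) S = (if wc then 1 else 1 + a * d) * row_tm a 0 wc True (replicate k False) S"
proof (induction k arbitrary: wc S)
  case 0
  then show ?case by (cases wc) auto
next
  case (Suc k)
  then obtain sc S' where S: "S = sc # S'" "length S' = k" by (cases S) auto
  show ?case using Suc.IH[OF S(2)] by (cases wc; cases sc) (simp_all add: S cell_wt_def)
qed

lemma transfer_free_top:
  "transfer ((a, d) # rs) (replicate k False) S = (1 + a * d) * transfer ((a, 0) # rs) (replicate k False) S"
  unfolding transfer.simps length_replicate sum_distrib_left
proof (rule sum.cong[OF refl])
  fix U assume "U \<in> bvecs k"
  then have "length U = k" by (simp add: bvecs_def)
  then show "row_tm a d False True (replicate k False) U * transfer rs U S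
      = (1 + a * d) * (row_tm a 0 False True (replicate k False) U * transfer rs U S)"
    by (subst row_tm_free_top) simp_all
qed

lemma row_tm_snoc:
  "length N = length S \<Longrightarrow>
   row_tm a d wc ec (N @ [nc]) (S @ [sc]) =
     row_tm a d wc False N S * cell_wt a d nc False sc ec + row_tm a d wc True N S * cell_wt a d nc True sc ec"
proof (induction N S arbitrary: wc rule: list_induct2)
  case Nil
  then show ?case by (cases wc; cases ec) auto
next
  case (Cons x N y S)
  then show ?case by (simp add: algebra_simps)
qed

text \<open>A south vertex matched in the last column can never become free again.\<close>
lemma transfer_last_matched:
  "length N = length S \<Longrightarrow> transfer rs (N @ [True]) (S @ [False]) = 0"
proof (induction rs arbitrary: N)
  case Nil
  then show ?case by simp
next
  case (Cons r rs)
  obtain a d where r: "r = (a, d)" by force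
  have z: "row_tm a d False True (N @ [True]) (U @ [False]) = 0" if "length U = length N" for U
    using that by (simp add: row_tm_snoc cell_wt_def)
  have "transfer (r # rs) (N @ [True]) (S @ [False]) =
     (\<Sum>U\<in>bvecs (length N). row_tm a d False True (N @ [True]) (U @ [True]) * transfer rs (U @ [True]) (S @ [False])) +
     (\<Sum>U\<in>bvecs (length N). row_tm a d False True (N @ [True]) (U @ [False]) * transfer rs (U @ [False]) (S @ [False]))"
    by (simp add: r sum_bvecs_snoc)
  also have "\<dots> = 0"
    using Cons z by (auto intro!: sum.neutral simp: bvecs_def)
  finally show ?case .
qed

lemma transfer_drop_free_column:
  "length N = length S \<Longrightarrow> transfer rs (N @ [False]) (S @ [False]) = transfer rs N S"
proof (induction rs arbitrary: N)
  case Nil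
  then show ?case by simp
next
  case (Cons r rs)
  obtain a d where r: "r = (a, d)" by force
  have z: "row_tm a d False True (N @ [False]) (U @ [False]) = row_tm a d False True N U"
    if "length U = length N" for U
    using that by (simp add: row_tm_snoc cell_wt_def)
  have "transfer (r # rs) (N @ [False]) (S @ [False]) =
     (\<Sum>U\<in>bvecs (length N). row_tm a d False True (N @ [False]) (U @ [True]) * transfer rs (U @ [True]) (S @ [False])) +
     (\<Sum>U\<in>bvecs (length N). row_tm a d False True (N @ [False]) (U @ [False]) * transfer rs (U @ [False]) (S @ [False]))"
    by (simp add: r sum_bvecs_snoc)
  also have "\<dots> = 0 + (\<Sum>U\<in>bvecs (length N). row_tm a d False True N U * transfer rs U S)"
    using Cons z transfer_last_matched
    by (intro arg_cong2[where f = "(+)"] sum.neutral ballI sum.cong) (auto simp: bvecs_def)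
  finally show ?case by (simp add: r)
qed

lemma row_tm_into_matched:
  "length U = Suc k \<Longrightarrow>
   row_tm a 0 False True U (replicate (Suc k) True) = (if U = replicate k True @ [False] then 1 else 0)"
proof (induction k arbitrary: U)
  case 0
  then obtain u where "U = [u]" by (cases U) auto
  then show ?case by (cases u) (simp_all add: cell_wt_def)
next
  case (Suc k)
  then obtain u U' where U: "U = u # U'" "length U' = Suc k" by (cases U) auto
  then obtain u' U'' where "U' = u' # U''" by (cases U') auto
  then show ?case
    using Suc.IH[OF U(2)] by (cases u) (simp_all add: U cell_wt_def)
qed

lemma transfer_peel:
  "transfer (rs @ [(a, 0)]) (replicate (Suc k) False) (replicate (Suc k) True) =
   transfer rs (replicate k False) (replicate k True)"
proof -
  let ?F = "replicate (Suc k) False"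
  have "transfer (rs @ [(a, 0)]) ?F (replicate (Suc k) True) =
     (\<Sum>U\<in>bvecs (Suc k). transfer rs ?F U * transfer [(a, 0)] U (replicate (Suc k) True))"
    unfolding transfer_append by simp
  also have "\<dots> = (\<Sum>U\<in>bvecs (Suc k). if U = replicate k True @ [False] then transfer rs ?F U else 0)"
  proof (rule sum.cong[OF refl])
    fix U assume "U \<in> bvecs (Suc k)"
    then have l: "length U = Suc k" by (simp add: bvecs_def)
    then show "transfer rs ?F U * transfer [(a, 0)] U (replicate (Suc k) True) =
        (if U = replicate k True @ [False] then transfer rs ?F U else 0)"
      using row_tm_into_matched[OF l, of a]
      by (simp add: transfer_single del: replicate_Suc transfer.simps)
  qed
  also have "\<dots> = transfer rs ?F (replicate k True @ [False])"
    by (rule sum_bvecs_delta) simp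
  also have "\<dots> = transfer rs (replicate k False) (replicate k True)"
    using transfer_drop_free_column[of "replicate k False" "replicate k True" rs]
    by (simp add: replicate_append_same)
  finally show ?thesis .
qed

text \<open>Nonnegativity keeps the exchange factors 1 + a' d nonzero.\<close>
definition nonneg_params :: "(int \<times> int) list \<Rightarrow> bool" where
  "nonneg_params rs \<longleftrightarrow> (\<forall>r\<in>set rs. fst r \<ge> 0 \<and> snd r \<ge> 0)"

definition product_formula_holds :: "(int \<times> int) list \<Rightarrow> bool" where
  "product_formula_holds rs \<longleftrightarrow>
     transfer rs (replicate (length rs) False) (replicate (length rs) True) = aztec_prod rs"

text \<open>Since both sides transform by the same nonzero factors under an exchange
  of adjacent rows, the validity of the formula is invariant under such exchanges.\<close>
lemma product_formula_swap:
  assumes "a \<ge> 0" "d \<ge> 0" "a' \<ge> 0" "d' \<ge> 0"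
  shows "product_formula_holds (pre @ (a, d) # (a', d') # rs) \<longleftrightarrow>
         product_formula_holds (pre @ (a', d') # (a, d) # rs)"
proof -
  have nz: "1 + a' * d \<noteq> 0" "1 + a * d' \<noteq> 0"
    using assms by (simp_all add: add_nonneg_eq_0_iff)
  show ?thesis
    unfolding product_formula_holds_def
    using transfer_swap[of a' d pre a d' rs] aztec_prod_swap[of a' d pre a d' rs] nz
    by simp (metis mult_left_cancel)
qed

lemma product_formula_move_to_end:
  "nonneg_params (pre @ r # post) \<Longrightarrow>
   product_formula_holds (pre @ r # post) \<longleftrightarrow> product_formula_holds (pre @ post @ [r])"
proof (induction post arbitrary: pre)
  case Nil
  then show ?case by simp
next
  case (Cons r' post)
  obtain a d where r: "r = (a, d)" by force
  obtain a' d' where r': "r' = (a', d')" by force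
  have "product_formula_holds (pre @ r # r' # post) \<longleftrightarrow> product_formula_holds ((pre @ [r']) @ r # post)"
    using Cons.prems unfolding r r' by (simp add: product_formula_swap nonneg_params_def)
  also have "\<dots> \<longleftrightarrow> product_formula_holds ((pre @ [r']) @ post @ [r])"
    using Cons.prems by (intro Cons.IH) (auto simp: nonneg_params_def)
  finally show ?case by simp
qed

text \<open>The closed product formula for nonnegative row parameters, by induction
  on the number of rows: move a row with d = 0 to the bottom and peel it off; if
  there is none, first make d = 0 in the top row using transfer_free_top.\<close>
theorem product_formula:
  "nonneg_params rs \<Longrightarrow> product_formula_holds rs"
proof (induction "length rs" arbitrary: rs)
  case 0
  then show ?case by (simp add: product_formula_holds_def)
next
  case (Suc n)
  have with_zero: "product_formula_holds rs"
    if len: "length rs = Suc n" and nn: "nonneg_params rs" and z: "(a, 0) \<in> set rs" for rs a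
  proof -
    obtain pre post where rs: "rs = pre @ (a, 0) # post"
      using z by (meson split_list)
    have "product_formula_holds rs \<longleftrightarrow> product_formula_holds (pre @ post @ [(a, 0)])"
      using nn unfolding rs by (rule product_formula_move_to_end)
    also have "\<dots> \<longleftrightarrow> product_formula_holds (pre @ post)"
      using len transfer_peel[of "pre @ post" a n]
      by (simp add: rs product_formula_holds_def aztec_prod_snoc_zero[of "pre @ post" a, simplified])
    also have "\<dots>"
      using Suc.hyps(1)[of "pre @ post"] len nn by (auto simp: rs nonneg_params_def)
    finally show ?thesis .
  qed
  obtain a d rest where rs: "rs = (a, d) # rest"
    using Suc.hyps(2) by (metis length_Suc_conv surj_pair)
  have "product_formula_holds ((a, 0) # rest)"
    using Suc.hyps(2) Suc.prems by (intro with_zero[of _ a]) (auto simp: rs nonneg_params_def)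
  then show ?case
    unfolding product_formula_holds_def rs
    by (simp only: transfer_free_top[of a d rest] aztec_prod_free_top[of a d rest] length_Cons)
qed

section \<open>Matchings of the Aztec diamond, cell by cell\<close>

definition deg :: "(nat \<times> nat) set \<Rightarrow> nat \<times> nat \<Rightarrow> nat" where
  "deg S v = card {e\<in>S. v \<in> AD_ends e}"

text \<open>S \<subseteq> E is a perfect matching of the vertices of AD_n outside C that does not
  touch C.  The vertices in C are those already matched during the sweep.\<close>
definition partial_pm :: "nat \<Rightarrow> (nat \<times> nat) set \<Rightarrow> (nat \<times> nat) set \<Rightarrow> (nat \<times> nat) set \<Rightarrow> bool" where
  "partial_pm n E C S \<longleftrightarrow> S \<subseteq> E \<and> (\<forall>v. deg S v = (if v \<in> AD_verts n - C then 1 else 0))"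

definition pm_sum :: "nat \<Rightarrow> (nat \<Rightarrow> nat \<Rightarrow> int) \<Rightarrow> (nat \<times> nat) set \<Rightarrow> (nat \<times> nat) set \<Rightarrow> int" where
  "pm_sum n w E C = (\<Sum>S\<in>{S. partial_pm n E C S}. \<Prod>e\<in>S. w (fst e) (snd e))"

lemma AD_M_eq_pm_sum: "AD_M n w = pm_sum n w (AD_pos n) {}"
proof -
  have "AD_perfect_matching n S \<longleftrightarrow> partial_pm n (AD_pos n) {} S" for S
  proof
    assume pm: "AD_perfect_matching n S"
    have "deg S v = 0" if "v \<notin> AD_verts n" for v
    proof -
      have "{e\<in>S. v \<in> AD_ends e} = {}"
        using that pm by (auto simp: AD_perfect_matching_def AD_verts_def)
      then show ?thesis by (metis deg_def card.empty)
    qed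
    then show "partial_pm n (AD_pos n) {} S"
      using pm by (auto simp: partial_pm_def AD_perfect_matching_def deg_def)
  next
    assume "partial_pm n (AD_pos n) {} S"
    then show "AD_perfect_matching n S"
      unfolding AD_perfect_matching_def partial_pm_def deg_def by (metis Diff_empty)
  qed
  then show ?thesis by (simp add: AD_M_def pm_sum_def)
qed

lemma pm_sum_cong: "AD_verts n - C = AD_verts n - C' \<Longrightarrow> pm_sum n w E C = pm_sum n w E C'"
  by (simp add: pm_sum_def partial_pm_def)

lemma pm_sum_no_edges: "pm_sum n w {} C = (if AD_verts n \<subseteq> C then 1 else 0)"
proof -
  have "{S. partial_pm n {} C S} = (if AD_verts n \<subseteq> C then {{}} else {})"
    by (auto simp: partial_pm_def deg_def split: if_splits)
  then show ?thesis by (simp add: pm_sum_def)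
qed

lemma pm_sum_unreachable:
  assumes "v \<in> AD_verts n" "v \<notin> C" "\<forall>e\<in>E. v \<notin> AD_ends e"
  shows "pm_sum n w E C = 0"
proof -
  have "\<not> partial_pm n E C S" for S
  proof
    assume S: "partial_pm n E C S"
    then have "deg S v = (if v \<in> AD_verts n - C then 1 else 0)"
      unfolding partial_pm_def by blast
    then have "deg S v = 1" using assms(1,2) by simp
    moreover have "{e\<in>S. v \<in> AD_ends e} = {}" using S assms(3) by (auto simp: partial_pm_def)
    ultimately show False by (simp add: deg_def)
  qed
  then show ?thesis by (simp add: pm_sum_def)
qed

lemma deg_insert:
  "finite S \<Longrightarrow> e \<notin> S \<Longrightarrow> deg (insert e S) v = deg S v + (if v \<in> AD_ends e then 1 else 0)"
proof -
  assume "finite S" "e \<notin> S"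
  moreover have "{e'\<in>insert e S. v \<in> AD_ends e'} =
      (if v \<in> AD_ends e then insert e {e'\<in>S. v \<in> AD_ends e'} else {e'\<in>S. v \<in> AD_ends e'})"
    by auto
  ultimately show ?thesis by (simp add: deg_def)
qed

lemma partial_pm_insert:
  assumes "finite S" "e \<notin> S"
  shows "partial_pm n (insert e E) C (insert e S) \<longleftrightarrow>
    AD_ends e \<inter> C = {} \<and> AD_ends e \<subseteq> AD_verts n \<and> partial_pm n E (C \<union> AD_ends e) S"
proof -
  have deg: "deg (insert e S) v = deg S v + (if v \<in> AD_ends e then 1 else 0)" for v
    using deg_insert[OF assms] .
  have "(\<forall>v. deg (insert e S) v = (if v \<in> AD_verts n - C then 1 else 0)) \<longleftrightarrow>
      AD_ends e \<inter> C = {} \<and> AD_ends e \<subseteq> AD_verts n \<and>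
      (\<forall>v. deg S v = (if v \<in> AD_verts n - (C \<union> AD_ends e) then 1 else 0))"
    unfolding deg by (auto split: if_splits)
  moreover have "insert e S \<subseteq> insert e E \<longleftrightarrow> S \<subseteq> E"
    using assms(2) by blast
  ultimately show ?thesis
    unfolding partial_pm_def by blast
qed

lemma finite_partial_pm: "finite E \<Longrightarrow> finite {S. partial_pm n E C S}"
  by (rule finite_subset[of _ "Pow E"]) (auto simp: partial_pm_def)

lemma partial_pm_insert_split:
  assumes fin: "finite E" and e: "e \<notin> E"
  shows "{S. partial_pm n (insert e E) C S} = {S. partial_pm n E C S} \<union>
    insert e ` {S. (AD_ends e \<inter> C = {} \<and> AD_ends e \<subseteq> AD_verts n) \<and> partial_pm n E (C \<union> AD_ends e) S}"
    (is "?All = ?Old \<union> insert e ` ?B")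
proof (intro equalityI subsetI)
  have unused: "partial_pm n (insert e E) C S \<longleftrightarrow> partial_pm n E C S" if "e \<notin> S" for S
    using that by (auto simp: partial_pm_def)
  {
    fix S assume S: "S \<in> ?All"
    show "S \<in> ?Old \<union> insert e ` ?B"
    proof (cases "e \<in> S")
      case True
      then have S_eq: "S = insert e (S - {e})" by blast
      have "S - {e} \<subseteq> E" using S by (auto simp: partial_pm_def)
      then have "finite (S - {e})" using fin by (rule finite_subset)
      then have "S - {e} \<in> ?B"
        using S partial_pm_insert[of "S - {e}" e n E C] S_eq by simp
      then show ?thesis using S_eq by blast
    qed (use S unused in auto)
  next
    fix S assume "S \<in> ?Old \<union> insert e ` ?B"
    then show "S \<in> ?All"
    proof
      assume "S \<in> insert e ` ?B"
      then obtain S' where S': "S' \<in> ?B" "S = insert e S'" by blast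
      then have "S' \<subseteq> E" by (simp add: partial_pm_def)
      then have "finite S'" "e \<notin> S'" using fin e by (auto intro: finite_subset)
      then show ?thesis using S' partial_pm_insert[of S' e n E C] by auto
    qed (use unused e in \<open>auto simp: partial_pm_def\<close>)
  }
qed

lemma pm_sum_insert:
  assumes fin: "finite E" and e: "e \<notin> E"
  shows "pm_sum n w (insert e E) C = pm_sum n w E C +
    (if AD_ends e \<inter> C = {} \<and> AD_ends e \<subseteq> AD_verts n
     then w (fst e) (snd e) * pm_sum n w E (C \<union> AD_ends e) else 0)"
proof -
  let ?cond = "AD_ends e \<inter> C = {} \<and> AD_ends e \<subseteq> AD_verts n"
  let ?B = "{S. ?cond \<and> partial_pm n E (C \<union> AD_ends e) S}"
  let ?f = "\<lambda>S. \<Prod>e\<in>S. w (fst e) (snd e)"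
  have sub: "S \<subseteq> E" if "partial_pm n E C' S" for S C'
    using that by (simp add: partial_pm_def)
  have disj: "{S. partial_pm n E C S} \<inter> insert e ` ?B = {}"
    using sub e by blast
  have inj: "inj_on (insert e) ?B"
    by (rule inj_onI) (metis (no_types, lifting) e insert_ident mem_Collect_eq sub subsetD)
  have fin_B: "finite ?B"
    using finite_partial_pm[OF fin, of n "C \<union> AD_ends e"] by (rule rev_finite_subset) auto
  have reindex: "(\<Sum>S\<in>insert e ` ?B. ?f S) = (\<Sum>S\<in>?B. ?f (insert e S))"
    by (simp only: sum.reindex[OF inj] comp_def)
  have "pm_sum n w (insert e E) C = pm_sum n w E C + (\<Sum>S\<in>?B. ?f (insert e S))"
    unfolding pm_sum_def partial_pm_insert_split[OF fin e] reindex[symmetric]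
    by (rule sum.union_disjoint[OF finite_partial_pm[OF fin] finite_imageI[OF fin_B] disj])
  also have "(\<Sum>S\<in>?B. ?f (insert e S)) = (\<Sum>S\<in>?B. w (fst e) (snd e) * ?f S)"
  proof (rule sum.cong[OF refl])
    fix S assume "S \<in> ?B"
    then have "S \<subseteq> E" using sub by blast
    then have "finite S" "e \<notin> S" using fin e by (auto intro: finite_subset)
    then show "?f (insert e S) = w (fst e) (snd e) * ?f S" by simp
  qed
  also have "\<dots> = (if ?cond then w (fst e) (snd e) * pm_sum n w E (C \<union> AD_ends e) else 0)"
    by (cases ?cond) (simp_all add: pm_sum_def sum_distrib_left cong: conj_cong)
  finally show ?thesis .
qed

lemma pm_sum_cell:
  fixes eWN eNE eWS eSE vW vN vE vS :: "nat \<times> nat"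
  assumes ends: "AD_ends eWN = {vW, vN}" "AD_ends eNE = {vN, vE}"
      "AD_ends eWS = {vW, vS}" "AD_ends eSE = {vS, vE}"
    and dist: "vW \<noteq> vN" "vW \<noteq> vE" "vW \<noteq> vS" "vN \<noteq> vE" "vN \<noteq> vS" "vE \<noteq> vS"
    and notin: "eWN \<notin> insert eNE (insert eWS (insert eSE E))" "eNE \<notin> insert eWS (insert eSE E)"
      "eWS \<notin> insert eSE E" "eSE \<notin> E"
    and fin: "finite E"
    and verts: "vN \<in> AD_verts n" "vW \<in> AD_verts n" "vE \<in> AD_verts n" "vS \<in> AD_verts n"
    and untouched: "\<forall>e\<in>E. vN \<notin> AD_ends e \<and> vW \<notin> AD_ends e"
    and free: "vE \<notin> C" "vS \<notin> C"
    and w1: "w (fst eNE) (snd eNE) = 1" "w (fst eWS) (snd eWS) = 1"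
  shows "pm_sum n w (insert eWN (insert eNE (insert eWS (insert eSE E)))) C =
    sum4 (\<lambda>sc ec. cell_wt (w (fst eWN) (snd eWN)) (w (fst eSE) (snd eSE)) (vN \<in> C) (vW \<in> C) sc ec *
       pm_sum n w E (C \<union> {vN, vW} \<union> (if ec then {vE} else {}) \<union> (if sc then {vS} else {})))"
proof -
  have zN: "pm_sum n w E X = 0" if "vN \<notin> X" for X
    using pm_sum_unreachable[OF verts(1) that] untouched by blast
  have zW: "pm_sum n w E X = 0" if "vW \<notin> X" for X
    using pm_sum_unreachable[OF verts(2) that] untouched by blast
  note dist' = dist dist[symmetric]
  show ?thesis
    using notin fin verts free
    by (cases "vN \<in> C"; cases "vW \<in> C";
        simp add: pm_sum_insert ends dist' w1 zN zW cell_wt_def sum4_def;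
        simp_all add: zN zW insert_commute insert_absorb dist' algebra_simps)
qed

section \<open>The sweep through AD_n\<close>

definition cell_row :: "nat \<times> nat \<Rightarrow> nat" where
  "cell_row p = (fst p + 1) div 2"

definition cell_col :: "nat \<times> nat \<Rightarrow> nat" where
  "cell_col p = (snd p + 1) div 2"

definition edges_after :: "nat \<Rightarrow> nat \<Rightarrow> nat \<Rightarrow> (nat \<times> nat) set" where
  "edges_after n i j = {p \<in> AD_pos n. i < cell_row p \<or> (cell_row p = i \<and> j < cell_col p)}"

text \<open>The vertices already matched when the sweep has processed the cells of row i
  up to column j: everything above row i; on the north line of row i the first j
  vertices and those flagged in N; on the middle line the west vertices of the
  processed cells, and the next one if wc holds; on the south line the vertices
  of the processed cells flagged in S.\<close>
definition matched_at :: "nat \<Rightarrow> nat \<Rightarrow> bool list \<Rightarrow> bool \<Rightarrow> bool list \<Rightarrow> (nat \<times> nat) set" where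
  "matched_at i j N wc S = {(x, y). y + 1 < 2*i
    \<or> (y + 1 = 2*i \<and> even x \<and> (x \<le> 2*j \<or> N ! (x div 2 - 1)))
    \<or> (y = 2*i \<and> ((odd x \<and> x < 2*j + 1) \<or> (x = 2*j + 1 \<and> wc)))
    \<or> (y = 2*i + 1 \<and> even x \<and> 0 < x \<and> x \<le> 2*j \<and> S ! (x div 2 - 1))}"

lemma ends_cell:
  assumes "1 \<le> i"
  shows "AD_ends (2*i - 1, 2*j + 1) = {(2*j + 1, 2*i), (2*j + 2, 2*i - 1)}"
    "AD_ends (2*i - 1, 2*j + 2) = {(2*j + 2, 2*i - 1), (2*j + 3, 2*i)}"
    "AD_ends (2*i, 2*j + 1) = {(2*j + 1, 2*i), (2*j + 2, 2*i + 1)}"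
    "AD_ends (2*i, 2*j + 2) = {(2*j + 2, 2*i + 1), (2*j + 3, 2*i)}"
proof -
  have "(2*i - 1 + 1) div 2 = i" "(2*i + 1) div 2 = i" "(2*j + 1 + 1) div 2 = Suc j"
    "(2*j + 2 + 1) div 2 = Suc j" "odd (2*i - 1)"
    using assms by (auto simp: odd_numeral)
  then show "AD_ends (2*i - 1, 2*j + 1) = {(2*j + 1, 2*i), (2*j + 2, 2*i - 1)}"
    "AD_ends (2*i - 1, 2*j + 2) = {(2*j + 2, 2*i - 1), (2*j + 3, 2*i)}"
    "AD_ends (2*i, 2*j + 1) = {(2*j + 1, 2*i), (2*j + 2, 2*i + 1)}"
    "AD_ends (2*i, 2*j + 2) = {(2*j + 2, 2*i + 1), (2*j + 3, 2*i)}"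
    by (simp_all add: AD_ends_def Let_def numeral_3_eq_3)
qed

lemma ends_around:
  "AD_ends p \<subseteq> {(2*cell_col p - 1, 2*cell_row p), (2*cell_col p + 1, 2*cell_row p),
                  (2*cell_col p, 2*cell_row p - 1), (2*cell_col p, 2*cell_row p + 1)}"
  by (auto simp: AD_ends_def Let_def cell_row_def cell_col_def)

lemma pos_bounds:
  "p \<in> AD_pos n \<Longrightarrow> 1 \<le> cell_row p \<and> cell_row p \<le> n \<and> 1 \<le> cell_col p \<and> cell_col p \<le> n"
  by (auto simp: AD_pos_def cell_row_def cell_col_def)

lemma in_verts: "p \<in> AD_pos n \<Longrightarrow> v \<in> AD_ends p \<Longrightarrow> v \<in> AD_verts n"
  by (auto simp: AD_verts_def)

lemma cell_verts:
  assumes "1 \<le> i" "i \<le> n" "j < n"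
  shows "(2*j + 2, 2*i - 1) \<in> AD_verts n" "(2*j + 1, 2*i) \<in> AD_verts n"
    "(2*j + 3, 2*i) \<in> AD_verts n" "(2*j + 2, 2*i + 1) \<in> AD_verts n"
proof -
  have "(2*i - 1, 2*j + 2) \<in> AD_pos n" "(2*i, 2*j + 1) \<in> AD_pos n"
    using assms by (auto simp: AD_pos_def)
  then show "(2*j + 2, 2*i - 1) \<in> AD_verts n" "(2*j + 1, 2*i) \<in> AD_verts n"
    "(2*j + 3, 2*i) \<in> AD_verts n" "(2*j + 2, 2*i + 1) \<in> AD_verts n"
    using in_verts ends_cell[OF assms(1), of j] by blast+
qed

lemma verts_cases:
  assumes "(x, y) \<in> AD_verts n"
  obtains (horizontal) "even y" "odd x" "2 \<le> y" "y \<le> 2*n" "x \<le> 2*n + 1"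
    | (vertical) "odd y" "even x" "2 \<le> x" "x \<le> 2*n" "y \<le> 2*n + 1"
proof -
  obtain p where p: "p \<in> AD_pos n" "(x, y) \<in> AD_ends p"
    using assms by (auto simp: AD_verts_def)
  then show ?thesis
    using ends_around[of p] pos_bounds[OF p(1)] that by auto
qed

lemma finite_edges_after: "finite (edges_after n i j)"
  by (rule finite_subset[of _ "AD_pos n"]) (auto simp: edges_after_def AD_pos_def)

lemma edges_after_step:
  assumes "1 \<le> i" "i \<le> n" "j < n"
  shows "edges_after n i j = insert (2*i - 1, 2*j + 1) (insert (2*i - 1, 2*j + 2)
           (insert (2*i, 2*j + 1) (insert (2*i, 2*j + 2) (edges_after n i (Suc j)))))"
  using assms by (auto simp: edges_after_def AD_pos_def cell_row_def cell_col_def)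

lemma edges_after_row_end: "edges_after n i n = edges_after n (Suc i) 0"
  by (auto simp: edges_after_def dest: pos_bounds)

lemma edges_after_first: "edges_after n 1 0 = AD_pos n"
  by (auto simp: edges_after_def dest: pos_bounds)

lemma edges_after_last: "edges_after n (Suc n) 0 = {}"
  by (auto simp: edges_after_def dest: pos_bounds)

lemma edges_after_avoid:
  assumes "1 \<le> i" "e \<in> edges_after n i (Suc j)"
  shows "(2*j + 2, 2*i - 1) \<notin> AD_ends e \<and> (2*j + 1, 2*i) \<notin> AD_ends e"
proof -
  have "e \<in> AD_pos n" "i < cell_row e \<or> (cell_row e = i \<and> Suc j < cell_col e)"
    using assms(2) by (auto simp: edges_after_def)
  then show ?thesis
    using ends_around[of e] pos_bounds[of e n] assms(1) by auto
qed

lemma matched_at_cell: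
  assumes "1 \<le> i"
  shows "(2*j + 2, 2*i - 1) \<in> matched_at i j N wc S \<longleftrightarrow> N ! j"
    "(2*j + 1, 2*i) \<in> matched_at i j N wc S \<longleftrightarrow> wc"
    "(2*j + 3, 2*i) \<notin> matched_at i j N wc S"
    "(2*j + 2, 2*i + 1) \<notin> matched_at i j N wc S"
  using assms by (auto simp: matched_at_def)

lemma south_line_snoc:
  assumes "length S = j"
  shows "(even x \<and> 0 < x \<and> x \<le> 2*j + 2 \<and> (S @ [sc]) ! (x div 2 - 1)) \<longleftrightarrow>
         (even x \<and> 0 < x \<and> x \<le> 2*j \<and> S ! (x div 2 - 1)) \<or> (x = 2*j + 2 \<and> sc)"
proof (cases "x \<le> 2*j")
  case True
  then have "x div 2 - 1 < j \<or> x = 0" by auto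
  then show ?thesis using True assms by (auto simp: nth_append)
next
  case False
  then have "x = 2*j + 1 \<or> x = 2*j + 2 \<or> x > 2*j + 2" by auto
  then show ?thesis using assms by (auto simp: nth_append)
qed

lemma matched_at_step:
  assumes i: "1 \<le> i" and l: "length S = j"
  shows "matched_at i j N wc S \<union> {(2*j + 2, 2*i - 1), (2*j + 1, 2*i)} \<union> (if ec then {(2*j + 3, 2*i)} else {})
      \<union> (if sc then {(2*j + 2, 2*i + 1)} else {}) = matched_at i (Suc j) N ec (S @ [sc])"
    (is "?lhs = ?rhs")
proof (rule set_eqI)
  fix v :: "nat \<times> nat"
  obtain x y where v: "v = (x, y)" by force
  have lhs: "(x, y) \<in> ?lhs \<longleftrightarrow> (x, y) \<in> matched_at i j N wc S \<or> (x = 2*j + 2 \<and> y = 2*i - 1)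
      \<or> (x = 2*j + 1 \<and> y = 2*i) \<or> (ec \<and> x = 2*j + 3 \<and> y = 2*i) \<or> (sc \<and> x = 2*j + 2 \<and> y = 2*i + 1)"
    by auto
  have "y + 1 < 2*i \<or> y + 1 = 2*i \<or> y = 2*i \<or> y = 2*i + 1 \<or> y > 2*i + 1" by auto
  then have "(x, y) \<in> matched_at i j N wc S \<or> (x = 2*j + 2 \<and> y = 2*i - 1) \<or> (x = 2*j + 1 \<and> y = 2*i)
      \<or> (ec \<and> x = 2*j + 3 \<and> y = 2*i) \<or> (sc \<and> x = 2*j + 2 \<and> y = 2*i + 1)
      \<longleftrightarrow> (x, y) \<in> ?rhs"
  proof (elim disjE)
    assume "y + 1 < 2*i"
    then show ?thesis by (simp add: matched_at_def)
  next
    assume y: "y + 1 = 2*i"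
    have "even x \<and> x \<le> 2*j + 2 \<longleftrightarrow> (even x \<and> x \<le> 2*j) \<or> x = 2*j + 2" by presburger
    moreover have "y = 2*i - 1" using y by simp
    ultimately show ?thesis using y by (auto simp: matched_at_def)
  next
    assume y: "y = 2*i"
    have "odd x \<and> x < 2*j + 3 \<longleftrightarrow> (odd x \<and> x < 2*j + 1) \<or> x = 2*j + 1" by presburger
    moreover have "x = 2*j + 3 \<longrightarrow> odd x" by presburger
    ultimately show ?thesis using y i by (auto simp: matched_at_def)
  next
    assume "y = 2*i + 1"
    then show ?thesis using i south_line_snoc[OF l, of x sc] by (auto simp: matched_at_def)
  next
    assume "y > 2*i + 1"
    then show ?thesis by (auto simp: matched_at_def)
  qed
  then show "v \<in> ?lhs \<longleftrightarrow> v \<in> ?rhs"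
    using lhs v by simp
qed

lemma matched_at_row_end:
  assumes i: "1 \<le> i"
  shows "AD_verts n - matched_at i n N True S = AD_verts n - matched_at (Suc i) 0 S False []"
proof -
  have "(x, y) \<in> matched_at i n N True S \<longleftrightarrow> (x, y) \<in> matched_at (Suc i) 0 S False []"
    if "(x, y) \<in> AD_verts n" for x y
    using that
  proof (cases rule: verts_cases)
    case horizontal
    then have "y + 1 \<noteq> 2*i" "y + 1 \<noteq> 2*(Suc i)" "y + 1 < 2*i \<or> y = 2*i \<longleftrightarrow> y + 1 < 2 * Suc i"
      by presburger+
    moreover have "x < 2*n + 1 \<or> x = 2*n + 1" using horizontal by auto
    ultimately show ?thesis using horizontal by (auto simp: matched_at_def)
  next
    case vertical
    then have "y \<noteq> 2*i" "y \<noteq> 2*Suc i" "y + 1 < 2*i \<or> y + 1 = 2*i \<longleftrightarrow> y + 1 < 2 * Suc i"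
      by presburger+
    then show ?thesis using vertical by (auto simp: matched_at_def)
  qed
  then show ?thesis by auto
qed

lemma matched_at_first: "AD_verts n - {} = AD_verts n - matched_at 1 0 (replicate n False) False []"
proof -
  have "(x, y) \<notin> matched_at 1 0 (replicate n False) False []" if "(x, y) \<in> AD_verts n" for x y
    using that
  proof (cases rule: verts_cases)
    case horizontal
    then show ?thesis by (auto simp: matched_at_def odd_pos)
  next
    case vertical
    then have "\<not> replicate n False ! (x div 2 - 1)" by auto
    then show ?thesis using vertical by (auto simp: matched_at_def odd_pos)
  qed
  then show ?thesis by auto
qed

lemma matched_at_last:
  assumes l: "length S = n"
  shows "AD_verts n \<subseteq> matched_at (Suc n) 0 S False [] \<longleftrightarrow> S = replicate n True"
proof
  assume sub: "AD_verts n \<subseteq> matched_at (Suc n) 0 S False []"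
  show "S = replicate n True"
  proof (rule nth_equalityI)
    show "length S = length (replicate n True)" using l by simp
    fix b assume b: "b < length S"
    then have "(2*n, 2*b + 1) \<in> AD_pos n" "1 \<le> n" using l by (auto simp: AD_pos_def)
    then have "(2*b + 2, 2*n + 1) \<in> AD_verts n"
      using ends_cell(3)[of n b] in_verts by blast
    then have "(2*b + 2, 2*n + 1) \<in> matched_at (Suc n) 0 S False []" using sub by blast
    then show "S ! b = replicate n True ! b" using b l by (simp add: matched_at_def)
  qed
next
  assume S: "S = replicate n True"
  have "(x, y) \<in> matched_at (Suc n) 0 S False []" if "(x, y) \<in> AD_verts n" for x y
    using that
  proof (cases rule: verts_cases)
    case horizontal
    then show ?thesis by (auto simp: matched_at_def)
  next
    case vertical
    then have "S ! (x div 2 - 1)" using S by auto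
    moreover have "y + 1 < 2 * Suc n \<or> y + 1 = 2 * Suc n" using vertical by auto
    ultimately show ?thesis using vertical by (auto simp: matched_at_def)
  qed
  then show "AD_verts n \<subseteq> matched_at (Suc n) 0 S False []" by auto
qed

lemma pm_sum_cell_step:
  assumes wts: "w (2*i - 1) (2*j + 1) = a" "w (2*i - 1) (2*j + 2) = 1"
      "w (2*i) (2*j + 1) = 1" "w (2*i) (2*j + 2) = d"
    and i: "1 \<le> i" "i \<le> n" and j: "j < n" and lS: "length S = j"
  shows "pm_sum n w (edges_after n i j) (matched_at i j N wc S) =
    sum4 (\<lambda>sc ec. cell_wt a d (N ! j) wc sc ec *
      pm_sum n w (edges_after n i (Suc j)) (matched_at i (Suc j) N ec (S @ [sc])))"
proof -
  let ?C = "matched_at i j N wc S"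
  note ec = ends_cell[OF i(1), of j]
  have dist: "(2*j + 1, 2*i) \<noteq> (2*j + 2, 2*i - 1)" "(2*j + 1, 2*i) \<noteq> (2*j + 3, 2*i)"
      "(2*j + 1, 2*i) \<noteq> (2*j + 2, 2*i + 1)" "(2*j + 2, 2*i - 1) \<noteq> (2*j + 3, 2*i)"
      "(2*j + 2, 2*i - 1) \<noteq> (2*j + 2, 2*i + 1)" "(2*j + 3, 2*i) \<noteq> (2*j + 2, 2*i + 1)"
    using i by auto
  have notin: "(2*i - 1, 2*j + 1) \<notin> insert (2*i - 1, 2*j + 2) (insert (2*i, 2*j + 1) (insert (2*i, 2*j + 2) (edges_after n i (Suc j))))"
      "(2*i - 1, 2*j + 2) \<notin> insert (2*i, 2*j + 1) (insert (2*i, 2*j + 2) (edges_after n i (Suc j)))"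
      "(2*i, 2*j + 1) \<notin> insert (2*i, 2*j + 2) (edges_after n i (Suc j))"
      "(2*i, 2*j + 2) \<notin> edges_after n i (Suc j)"
    using i by (auto simp: edges_after_def cell_row_def cell_col_def)
  have "pm_sum n w (edges_after n i j) ?C =
    sum4 (\<lambda>sc ec. cell_wt a d ((2*j + 2, 2*i - 1) \<in> ?C) ((2*j + 1, 2*i) \<in> ?C) sc ec *
      pm_sum n w (edges_after n i (Suc j)) (?C \<union> {(2*j + 2, 2*i - 1), (2*j + 1, 2*i)}
        \<union> (if ec then {(2*j + 3, 2*i)} else {}) \<union> (if sc then {(2*j + 2, 2*i + 1)} else {})))"
  proof -
    have "\<forall>e\<in>edges_after n i (Suc j). (2*j + 2, 2*i - 1) \<notin> AD_ends e \<and> (2*j + 1, 2*i) \<notin> AD_ends e"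
      using edges_after_avoid[OF i(1)] by blast
    from pm_sum_cell[OF ec dist notin finite_edges_after cell_verts[OF i j] this matched_at_cell(3,4)[OF i(1)]]
    show ?thesis
      unfolding edges_after_step[OF i j] using wts by simp
  qed
  also have "\<dots> = sum4 (\<lambda>sc ec. cell_wt a d (N ! j) wc sc ec *
      pm_sum n w (edges_after n i (Suc j)) (matched_at i (Suc j) N ec (S @ [sc])))"
    using matched_at_cell[OF i(1)] matched_at_step[OF i(1) lS] by simp
  finally show ?thesis .
qed

lemma pm_sum_row_end:
  assumes i: "1 \<le> i" "i \<le> n"
  shows "pm_sum n w (edges_after n i n) (matched_at i n N wc S) =
    (if wc then pm_sum n w (edges_after n (Suc i) 0) (matched_at (Suc i) 0 S False []) else 0)"
proof (cases wc)
  case True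
  have "pm_sum n w (edges_after n (Suc i) 0) (matched_at i n N True S) =
      pm_sum n w (edges_after n (Suc i) 0) (matched_at (Suc i) 0 S False [])"
    by (rule pm_sum_cong[OF matched_at_row_end[OF i(1)]])
  then show ?thesis
    using True by (simp add: edges_after_row_end)
next
  case False
  have "(2*i - 1, 2*(n - 1) + 2) \<in> AD_pos n" "2*(n - 1) + 3 = 2*n + 1"
    using i by (auto simp: AD_pos_def)
  then have "(2*n + 1, 2*i) \<in> AD_verts n"
    using ends_cell(2)[OF i(1), of "n - 1"] in_verts by (metis insertCI)
  moreover have "(2*n + 1, 2*i) \<notin> matched_at i n N False S"
    by (simp add: matched_at_def)
  moreover have "(2*n + 1, 2*i) \<notin> AD_ends e" if "e \<in> edges_after n (Suc i) 0" for e
  proof -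
    have "i < cell_row e" using that by (auto simp: edges_after_def)
    moreover have "snd v \<ge> 2 * cell_row e - 1" if "v \<in> AD_ends e" for v
      using that ends_around[of e] by auto
    ultimately show ?thesis by fastforce
  qed
  ultimately have "pm_sum n w (edges_after n (Suc i) 0) (matched_at i n N False S) = 0"
    by (blast intro: pm_sum_unreachable)
  then show ?thesis
    using False by (simp add: edges_after_row_end)
qed

lemma pm_sum_row:
  assumes wts: "\<And>j. 1 \<le> j \<Longrightarrow> j \<le> n \<Longrightarrow>
      w (2*i - 1) (2*j - 1) = a \<and> w (2*i - 1) (2*j) = 1 \<and> w (2*i) (2*j - 1) = 1 \<and> w (2*i) (2*j) = d"
    and i: "1 \<le> i" "i \<le> n" and lN: "length N = n"
  shows "j \<le> n \<Longrightarrow> length S = j \<Longrightarrow>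
    pm_sum n w (edges_after n i j) (matched_at i j N wc S) =
    (\<Sum>T\<in>bvecs (n - j). row_tm a d wc True (drop j N) T *
       pm_sum n w (edges_after n (Suc i) 0) (matched_at (Suc i) 0 (S @ T) False []))"
proof (induction "n - j" arbitrary: j wc S)
  case 0
  then have "j = n" by simp
  then show ?case using lN pm_sum_row_end[OF i] by (simp add: bvecs_0)
next
  case (Suc k)
  then have j: "j < n" by simp
  have IH: "pm_sum n w (edges_after n i (Suc j)) (matched_at i (Suc j) N ec (S @ [sc])) =
     (\<Sum>T\<in>bvecs (n - Suc j). row_tm a d ec True (drop (Suc j) N) T *
        pm_sum n w (edges_after n (Suc i) 0) (matched_at (Suc i) 0 ((S @ [sc]) @ T) False []))" for ec sc
    using Suc by simp
  have drop: "drop j N = N ! j # drop (Suc j) N" using j lN by (simp add: Cons_nth_drop_Suc)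
  have len: "n - j = Suc (n - Suc j)" using j by simp
  have "w (2*i - 1) (2*j + 1) = a" "w (2*i - 1) (2*j + 2) = 1"
      "w (2*i) (2*j + 1) = 1" "w (2*i) (2*j + 2) = d"
    using wts[of "Suc j"] j by auto
  then have step: "pm_sum n w (edges_after n i j) (matched_at i j N wc S) =
    sum4 (\<lambda>sc ec. cell_wt a d (N ! j) wc sc ec *
      pm_sum n w (edges_after n i (Suc j)) (matched_at i (Suc j) N ec (S @ [sc])))"
    using i j Suc.prems(2) by (rule pm_sum_cell_step)
  show ?case
    unfolding step IH drop len
    by (simp add: sum4_def sum_bvecs_Cons sum.distrib sum_distrib_left algebra_simps)
qed

lemma pm_sum_rows:
  assumes wts: "\<And>i j. 1 \<le> i \<Longrightarrow> i \<le> n \<Longrightarrow> 1 \<le> j \<Longrightarrow> j \<le> n \<Longrightarrow>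
     w (2*i - 1) (2*j - 1) = fst (rp i) \<and> w (2*i - 1) (2*j) = 1 \<and>
     w (2*i) (2*j - 1) = 1 \<and> w (2*i) (2*j) = snd (rp i)"
  shows "1 \<le> i \<Longrightarrow> i \<le> Suc n \<Longrightarrow> length N = n \<Longrightarrow>
    pm_sum n w (edges_after n i 0) (matched_at i 0 N False []) =
    transfer (map rp [i..<Suc n]) N (replicate n True)"
proof (induction "Suc n - i" arbitrary: i N)
  case 0
  then have "i = Suc n" by simp
  then show ?case
    using matched_at_last[OF 0(4)] by (simp add: edges_after_last pm_sum_no_edges)
next
  case (Suc k)
  show ?case
  proof (cases "i = Suc n")
    case True
    then show ?thesis
      using matched_at_last[OF Suc.prems(3)] by (simp add: edges_after_last pm_sum_no_edges)
  next
    case False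
    then have i: "1 \<le> i" "i \<le> n" using Suc.prems by auto
    obtain a d where rp: "rp i = (a, d)" by force
    have "pm_sum n w (edges_after n i 0) (matched_at i 0 N False []) =
      (\<Sum>T\<in>bvecs n. row_tm a d False True N T * pm_sum n w (edges_after n (Suc i) 0) (matched_at (Suc i) 0 T False []))"
      using pm_sum_row[where j = 0 and S = "[]" and wc = False and a = a and d = d] wts[of i] i Suc.prems rp
      by simp
    also have "\<dots> = (\<Sum>T\<in>bvecs n. row_tm a d False True N T * transfer (map rp [Suc i..<Suc n]) T (replicate n True))"
      using Suc i by (intro sum.cong refl) (simp add: bvecs_def)
    also have "\<dots> = transfer (map rp [i..<Suc n]) N (replicate n True)"
      using i Suc.prems rp by (simp add: upt_conv_Cons del: upt_Suc)
    finally show ?thesis .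
  qed
qed

theorem AD_M_transfer:
  assumes "\<And>i j. 1 \<le> i \<Longrightarrow> i \<le> n \<Longrightarrow> 1 \<le> j \<Longrightarrow> j \<le> n \<Longrightarrow>
     w (2*i - 1) (2*j - 1) = fst (rp i) \<and> w (2*i - 1) (2*j) = 1 \<and>
     w (2*i) (2*j - 1) = 1 \<and> w (2*i) (2*j) = snd (rp i)"
  shows "AD_M n w = transfer (map rp [1..<Suc n]) (replicate n False) (replicate n True)"
proof -
  have "AD_M n w = pm_sum n w (edges_after n 1 0) (matched_at 1 0 (replicate n False) False [])"
    unfolding AD_M_eq_pm_sum edges_after_first by (rule pm_sum_cong[OF matched_at_first])
  also have "\<dots> = transfer (map rp [1..<Suc n]) (replicate n False) (replicate n True)"
    by (rule pm_sum_rows[OF assms]) auto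
  finally show ?thesis .
qed

section \<open>Binary-block matrices\<close>

text \<open>Row parameters (a, d) of a block: a is its top-left, d its bottom-right entry.\<close>
definition blk_a :: "bsym \<Rightarrow> int" where
  "blk_a s = (if has_minus s then 0 else 1)"

definition blk_d :: "bsym \<Rightarrow> int" where
  "blk_d s = (if has_plus s then 0 else 1)"

lemma AD_M_int: "int (AD_M n w) = AD_M n (\<lambda>r c. int (w r c))"
  by (simp add: AD_M_def of_nat_sum of_nat_prod)

lemma nonneg_blk_params: "nonneg_params (zip (map blk_a cs) (map blk_d cs))"
  by (auto simp: nonneg_params_def blk_a_def blk_d_def set_zip)

lemma AD_M_bbmat:
  assumes "n \<le> length cs"
  shows "int (AD_M n (wt (2 * length cs) 2 (bbmat cs))) =
    aztec_prod (zip (map blk_a (take n cs)) (map blk_d (take n cs)))"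
proof -
  let ?L = "length cs"
  let ?w = "\<lambda>r c. int (wt (2 * ?L) 2 (bbmat cs) r c)"
  let ?rp = "\<lambda>k. (blk_a (cs ! (k - 1)), blk_d (cs ! (k - 1)))"
  have wts: "?w (2*i - 1) (2*j - 1) = fst (?rp i) \<and> ?w (2*i - 1) (2*j) = 1 \<and>
      ?w (2*i) (2*j - 1) = 1 \<and> ?w (2*i) (2*j) = snd (?rp i)"
    if "1 \<le> i" "i \<le> n" "1 \<le> j" "j \<le> n" for i j
  proof -
    have "(2*i - 1 - 1) mod (2 * ?L) = 2*i - 2" "(2*i - 1) mod (2 * ?L) = 2*i - 1"
      using that assms by auto
    moreover have "(2*j - 1 - 1) mod 2 = 0" "(2*j - 1) mod 2 = 1"
      "(2*i - 2) div 2 = i - 1" "(2*i - 2) mod 2 = 0" "(2*i - 1) div 2 = i - 1" "(2*i - 1) mod 2 = 1"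
      using that by presburger+
    ultimately show ?thesis
      by (simp add: wt_def bbmat_def block_entry_def blk_a_def blk_d_def)
  qed
  have "int (AD_M n (wt (2 * ?L) 2 (bbmat cs))) = AD_M n ?w"
    by (rule AD_M_int)
  also have "\<dots> = transfer (map ?rp [1..<Suc n]) (replicate n False) (replicate n True)"
    by (rule AD_M_transfer) (use wts in blast)
  also have "map ?rp [1..<Suc n] = zip (map blk_a (take n cs)) (map blk_d (take n cs))"
    by (rule nth_equalityI) (use assms in \<open>auto simp del: upt_Suc\<close>)
  also have "transfer (zip (map blk_a (take n cs)) (map blk_d (take n cs))) (replicate n False) (replicate n True)
      = aztec_prod (zip (map blk_a (take n cs)) (map blk_d (take n cs)))"
    using product_formula[OF nonneg_blk_params[of "take n cs"]] assms
    by (simp add: product_formula_holds_def min_absorb1)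
  finally show ?thesis .
qed

lemma prod_list_snd_zip:
  "length xs = length ys \<Longrightarrow>
   prod_list (map (\<lambda>x. 1 + a * snd x) (zip xs ys)) = prod_list (map (\<lambda>y. 1 + (a::int) * y) ys)"
proof -
  assume l: "length xs = length ys"
  have "map (\<lambda>x. 1 + a * snd x) (zip xs ys) = map (\<lambda>y. 1 + a * y) (map snd (zip xs ys))"
    by simp
  then show ?thesis using l by simp
qed

lemma aztec_prod_shift:
  "length as = length ds \<Longrightarrow>
   aztec_prod (zip as ds) =
     prod_list (map (\<lambda>(a, d). 1 + a * d) (zip as ds)) * aztec_prod (zip (butlast as) (tl ds))"
proof (induction as ds rule: list_induct2)
  case Nil
  then show ?case by simp
next
  case (Cons a as d ds)
  show ?case
  proof (cases as)
    case Nil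
    then show ?thesis using Cons.hyps by simp
  next
    case (Cons a2 as')
    then obtain d2 ds' where ds: "ds = d2 # ds'" using Cons.hyps by (cases ds) auto
    have l1: "length (butlast as) = length ds'" using Cons.hyps ds by simp
    have "aztec_prod (zip (a # as) (d # ds)) =
        (1 + a * d) * prod_list (map (\<lambda>y. 1 + a * y) ds) *
        (prod_list (map (\<lambda>(a, d). 1 + a * d) (zip as ds)) * aztec_prod (zip (butlast as) (tl ds)))"
      using prod_list_snd_zip[OF Cons.hyps, of a] by (simp add: Cons.IH)
    moreover have "aztec_prod (zip (butlast (a # as)) (tl (d # ds))) =
        (1 + a * d2) * prod_list (map (\<lambda>y. 1 + a * y) ds') * aztec_prod (zip (butlast as) (tl ds))"
      using Cons prod_list_snd_zip[OF l1, of a] ds by simp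
    ultimately show ?thesis using ds by (simp add: ac_simps)
  qed
qed

text \<open>The diagonal factor 1 + a d of a block is 2 for the block of 0 and 1 otherwise.\<close>
lemma diagonal_factors:
  "prod_list (map (\<lambda>(a, d). 1 + a * d) (zip (map blk_a cs) (map blk_d cs)))
     = 2 ^ length (filter (\<lambda>s. s = Z) cs)"
proof (induction cs)
  case (Cons s cs)
  then show ?case by (cases s) (simp_all add: blk_a_def blk_d_def has_plus_def has_minus_def)
qed simp

lemma length_shcode: "length (shcode cs) = length cs"
  by (simp add: shcode_def Let_def)

text \<open>sh keeps the a-part of each block and moves the d-part one position up.\<close>
lemma shcode_params:
  assumes "length cs = m" "m \<ge> 1"
  shows "zip (map blk_a (take (m - 1) (shcode cs))) (map blk_d (take (m - 1) (shcode cs)))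
       = zip (butlast (map blk_a cs)) (tl (map blk_d cs))"
proof (rule nth_equalityI)
  fix k assume "k < length (zip (map blk_a (take (m - 1) (shcode cs))) (map blk_d (take (m - 1) (shcode cs))))"
  then have k: "k < m - 1" using assms by (simp add: length_shcode)
  have "has_plus (mk_sym p q) = p" "has_minus (mk_sym p q) = q" for p q
    by (auto simp: mk_sym_def has_plus_def has_minus_def)
  with k assms show "zip (map blk_a (take (m - 1) (shcode cs))) (map blk_d (take (m - 1) (shcode cs))) ! k
      = zip (butlast (map blk_a cs)) (tl (map blk_d cs)) ! k"
    by (simp add: shcode_def Let_def blk_a_def blk_d_def nth_butlast nth_tl)
qed (use assms in \<open>simp add: length_shcode\<close>)

theorem lemma3p3:
  fixes cs :: "bsym list" and m :: nat
  assumes "m \<ge> 1" and "length cs = m"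
  shows "(AD_M m (wt (2*m) 2 (bbmat cs)) :: nat) =
           2 ^ length (filter (\<lambda>s. s = Z) cs) * AD_M (m - 1) (wt (2*m) 2 (bbmat (shcode cs)))"
proof -
  let ?as = "map blk_a cs" and ?ds = "map blk_d cs"
  have "int (AD_M m (wt (2*m) 2 (bbmat cs))) = aztec_prod (zip ?as ?ds)"
    using AD_M_bbmat[of m cs] assms(2) by simp
  also have "\<dots> = 2 ^ length (filter (\<lambda>s. s = Z) cs) * aztec_prod (zip (butlast ?as) (tl ?ds))"
    by (subst aztec_prod_shift) (simp_all add: diagonal_factors)
  also have "aztec_prod (zip (butlast ?as) (tl ?ds)) = int (AD_M (m - 1) (wt (2*m) 2 (bbmat (shcode cs))))"
    using AD_M_bbmat[of "m - 1" "shcode cs"] shcode_params[OF assms(2,1)] assms(2)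
    by (simp add: length_shcode)
  finally have "int (AD_M m (wt (2*m) 2 (bbmat cs))) =
      int (2 ^ length (filter (\<lambda>s. s = Z) cs) * AD_M (m - 1) (wt (2*m) 2 (bbmat (shcode cs))))"
    by simp
  then show ?thesis by (simp only: of_nat_eq_iff)
qed

end
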